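(* Let $X$ be an $n$-dimensional random vector with $X\le_{\mathrm{cx}}\mathcal N(\mu,\sigma^2I)$, and let $\alpha>0$. Then $$\mathrm P(\|X-\mu\|_\infty\le\alpha)\ge1-\sqrt2\,n\,e^{-\alpha^2/(4\sigma^2)}.$$ In particular, for $\gamma\in(0,1]$, $\mathrm P\bigl(\|X-\mu\|_\infty\le2\sigma\sqrt{\log(\sqrt2n/\gamma)}\bigr)\ge1-\gamma$.
   Context: For random vectors $X,Y$ in $\mathbb R^n$, $X\le_{\mathrm{cx}}Y$ (convex order) means $\mathbb Ef(X)\le\mathbb Ef(Y)$ for all convex $f:\mathbb R^n\to\mathbb R$ for which the expectations exist; a distribution on the right denotes a random vector with that distribution. *)

theory Defs
  imports "HOL-Probability.Probability"
begin

text \<open>Isotropic Gaussian N(mu, sigma^2 I) on real^'n (sigma is the standard deviation).\<close>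
definition gauss_iso :: "real^'n \<Rightarrow> real \<Rightarrow> (real^'n) measure" where
  "gauss_iso mu \<sigma> = density lborel (\<lambda>x. ennreal (\<Prod>i\<in>UNIV. normal_density (mu$i) \<sigma> (x$i)))"

definition expect_exists :: "'a measure \<Rightarrow> ('a \<Rightarrow> real) \<Rightarrow> bool" where
  "expect_exists M g \<longleftrightarrow> g \<in> borel_measurable M \<and>
     ((\<integral>\<^sup>+x. ennreal (g x) \<partial>M) \<noteq> \<infinity> \<or> (\<integral>\<^sup>+x. ennreal (- g x) \<partial>M) \<noteq> \<infinity>)"

definition ext_expect :: "'a measure \<Rightarrow> ('a \<Rightarrow> real) \<Rightarrow> ereal" where
  "ext_expect M g = enn2ereal (\<integral>\<^sup>+x. ennreal (g x) \<partial>M) - enn2ereal (\<integral>\<^sup>+x. ennreal (- g x) \<partial>M)"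

definition cx_le :: "'a measure \<Rightarrow> ('a \<Rightarrow> real^'n) \<Rightarrow> (real^'n) measure \<Rightarrow> bool" where
  "cx_le M X N \<longleftrightarrow> (\<forall>f :: real^'n \<Rightarrow> real. convex_on UNIV f \<longrightarrow>
      expect_exists M (\<lambda>\<omega>. f (X \<omega>)) \<longrightarrow> expect_exists N f \<longrightarrow>
      ext_expect M (\<lambda>\<omega>. f (X \<omega>)) \<le> ext_expect N f)"

definition linf_norm :: "real^'n \<Rightarrow> real" where
  "linf_norm x = Max (range (\<lambda>i. \<bar>x$i\<bar>))"

end

theory Submission
  imports Defs
begin

text \<open>The function \<open>f x = exp ((x$i - mu$i)^2 / (4 * \<sigma>^2))\<close> is convex and nonnegative,
so the convex order gives \<open>E f(X) \<le> E f(Z)\<close> for \<open>Z \<sim> N(mu, \<sigma>^2 I)\<close>. Multiplying the normal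
density by this factor yields \<open>sqrt 2\<close> times the density of \<open>N(mu$i, 2\<sigma>^2)\<close>, so
\<open>E f(Z) = sqrt 2\<close>, and Markov's inequality bounds \<open>P(|X$i - mu$i| > \<alpha>)\<close> by
\<open>sqrt 2 * exp (-\<alpha>^2 / (4\<sigma>^2))\<close>. A union bound over the \<open>n\<close> coordinates gives the first claim;
the second is the first at \<open>\<alpha> = 2\<sigma> sqrt (ln (sqrt 2 n / \<gamma>))\<close>.\<close>

lemma convex_on_exp_comp:
  assumes "convex_on S g"
  shows "convex_on S (\<lambda>x. exp (g x))"
proof (rule convex_onI)
  show "convex S" using assms by (rule convex_on_imp_convex)
next
  fix t :: real and x y assume t: "0 < t" "t < 1" and xy: "x \<in> S" "y \<in> S"
  have "exp (g ((1 - t) *\<^sub>R x + t *\<^sub>R y)) \<le> exp ((1 - t) * g x + t * g y)"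
    using convex_onD[OF assms, of t x y] t xy by simp
  also have "\<dots> \<le> (1 - t) * exp (g x) + t * exp (g y)"
    using convex_onD[OF exp_convex, of t "g x" "g y"] t by simp
  finally show "exp (g ((1 - t) *\<^sub>R x + t *\<^sub>R y)) \<le> (1 - t) * exp (g x) + t * exp (g y)" .
qed

lemma convex_on_comp_affine:
  fixes g :: "'b::real_vector \<Rightarrow> real" and h :: "'a::real_vector \<Rightarrow> 'b"
  assumes "convex_on UNIV g" and "linear h"
  shows "convex_on UNIV (\<lambda>x. g (h x + b))"
proof (rule convex_onI)
  fix t :: real and x y
  have "h ((1 - t) *\<^sub>R x + t *\<^sub>R y) = (1 - t) *\<^sub>R h x + t *\<^sub>R h y"
    by (simp add: linear_add[OF assms(2)] linear_scale[OF assms(2)])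
  then have "h ((1 - t) *\<^sub>R x + t *\<^sub>R y) + b = (1 - t) *\<^sub>R (h x + b) + t *\<^sub>R (h y + b)"
    by (simp add: algebra_simps)
  moreover assume "0 < t" "t < 1"
  ultimately show "g (h ((1 - t) *\<^sub>R x + t *\<^sub>R y) + b) \<le> (1 - t) * g (h x + b) + t * g (h y + b)"
    using convex_onD[OF assms(1), of t] by simp
qed simp

lemma convex_on_exp_square_coordinate:
  fixes c m :: real assumes "0 < c"
  shows "convex_on UNIV (\<lambda>x::real^'n. exp ((x$i - m)^2 / c))"
proof -
  have "convex_on UNIV (\<lambda>s::real. exp (s^2 / c))"
    using assms convex_power2 by (intro convex_on_exp_comp convex_on_cdiv) auto
  then show ?thesis
    using convex_on_comp_affine[of "\<lambda>s. exp (s^2 / c)" "\<lambda>x::real^'n. x$i" "- m"]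
    by (simp add: bounded_linear_vec_nth bounded_linear.linear)
qed

lemma normal_density_mult_exp_square:
  fixes m \<sigma> t :: real
  assumes "0 < \<sigma>"
  shows "normal_density m \<sigma> t * exp ((t - m)^2 / (4 * \<sigma>^2)) = sqrt 2 * normal_density m (sqrt 2 * \<sigma>) t"
proof -
  have "sqrt (2 * pi * (sqrt 2 * \<sigma>)\<^sup>2) = sqrt 2 * sqrt (2 * pi * \<sigma>\<^sup>2)"
    by (simp add: power_mult_distrib real_sqrt_mult)
  moreover have "- (t - m)\<^sup>2 / (2 * \<sigma>\<^sup>2) + (t - m)^2 / (4 * \<sigma>^2) = - (t - m)\<^sup>2 / (2 * (sqrt 2 * \<sigma>)\<^sup>2)"
    using assms by (simp add: power_mult_distrib field_simps)
  ultimately show ?thesis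
    unfolding normal_density_def using assms by (simp add: exp_add[symmetric] field_simps)
qed

lemma nn_integral_normal_density_exp_square:
  fixes m \<sigma> :: real assumes "0 < \<sigma>"
  shows "(\<integral>\<^sup>+t. ennreal (normal_density m \<sigma> t) * ennreal (exp ((t - m)^2 / (4 * \<sigma>^2))) \<partial>lborel) = ennreal (sqrt 2)"
proof -
  have "(\<integral>\<^sup>+t. ennreal (normal_density m \<sigma> t) * ennreal (exp ((t - m)^2 / (4 * \<sigma>^2))) \<partial>lborel)
      = (\<integral>\<^sup>+t. ennreal (sqrt 2) * ennreal (normal_density m (sqrt 2 * \<sigma>) t) \<partial>lborel)"
    using assms by (simp add: ennreal_mult[symmetric] normal_density_mult_exp_square)
  also have "\<dots> = ennreal (sqrt 2)"
    using assms by (simp add: nn_integral_cmult nn_integral_eq_integral)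
  finally show ?thesis .
qed

lemma nn_integral_lborel_prod_coordinate:
  fixes p :: "'n::finite \<Rightarrow> real \<Rightarrow> ennreal" and g :: "real \<Rightarrow> ennreal" and i :: 'n
  assumes [measurable]: "\<And>j. p j \<in> borel_measurable borel" "g \<in> borel_measurable borel"
    and "\<And>j. j \<noteq> i \<Longrightarrow> (\<integral>\<^sup>+t. p j t \<partial>lborel) = 1"
  shows "(\<integral>\<^sup>+x. (\<Prod>j\<in>UNIV. p j (x$j)) * g (x$i) \<partial>lborel) = (\<integral>\<^sup>+t. p i t * g t \<partial>lborel)"
proof -
  define e where "e j = axis j (1::real)" for j :: 'n
  define q where "q j t = p j t * (if j = i then g t else 1)" for j t
  have Basis: "Basis = range e" by (auto simp: Basis_vec_def e_def)
  have inj: "inj e" by (auto simp: inj_def axis_eq_axis e_def)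
  have inv_e: "inv e (axis j 1) = j" for j using inv_f_f[OF inj] by (simp add: e_def)
  have [measurable]: "q j \<in> borel_measurable borel" for j unfolding q_def by measurable
  have "(\<Prod>j\<in>UNIV. p j (x$j)) * g (x$i) = (\<Prod>j\<in>UNIV. q j (x$j))" for x :: "real^'n"
    by (simp add: q_def prod.distrib)
  also have "\<dots>x = (\<Prod>b\<in>Basis. q (inv e b) (x \<bullet> b))" for x :: "real^'n"
    unfolding Basis by (subst prod.reindex[OF inj]) (simp add: inv_e e_def inner_axis)
  finally have "(\<integral>\<^sup>+x. (\<Prod>j\<in>UNIV. p j (x$j)) * g (x$i) \<partial>lborel)
      = (\<integral>\<^sup>+x. (\<Prod>b\<in>Basis. q (inv e b) (x \<bullet> b)) \<partial>lborel)"
    by simp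
  also have "\<dots> = (\<Prod>b\<in>Basis. \<integral>\<^sup>+t. q (inv e b) t \<partial>lborel)"
    by (rule nn_integral_lborel_prod) auto
  also have "\<dots> = (\<Prod>j\<in>UNIV. \<integral>\<^sup>+t. q j t \<partial>lborel)"
    unfolding Basis by (subst prod.reindex[OF inj]) (simp add: inv_e e_def)
  also have "\<dots> = (\<integral>\<^sup>+t. q i t \<partial>lborel)"
  proof -
    have "q j = p j" if "j \<noteq> i" for j using that by (simp add: q_def fun_eq_iff)
    then show ?thesis using assms(3) by (subst prod.remove[of _ i]) (auto intro!: prod.neutral)
  qed
  finally show ?thesis by (simp add: q_def)
qed

lemma nn_integral_gauss_iso_coordinate:
  fixes mu :: "real^'n" and g :: "real \<Rightarrow> ennreal"
  assumes "0 < \<sigma>" and [measurable]: "g \<in> borel_measurable borel"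
  shows "(\<integral>\<^sup>+x. g (x$i) \<partial>gauss_iso mu \<sigma>) = (\<integral>\<^sup>+t. ennreal (normal_density (mu$i) \<sigma> t) * g t \<partial>lborel)"
proof -
  have "(\<integral>\<^sup>+x. g (x$i) \<partial>gauss_iso mu \<sigma>)
      = (\<integral>\<^sup>+x. (\<Prod>j\<in>UNIV. ennreal (normal_density (mu$j) \<sigma> (x$j))) * g (x$i) \<partial>lborel)"
    unfolding gauss_iso_def by (subst nn_integral_density) (auto simp: prod_ennreal)
  also have "\<dots> = (\<integral>\<^sup>+t. ennreal (normal_density (mu$i) \<sigma> t) * g t \<partial>lborel)"
    using assms by (intro nn_integral_lborel_prod_coordinate) (auto simp: nn_integral_eq_integral)
  finally show ?thesis .
qed

lemma cx_le_nn_integral_le: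
  fixes X :: "'a \<Rightarrow> real^'n" and f :: "real^'n \<Rightarrow> real"
  assumes "cx_le M X N" "X \<in> borel_measurable M" "sets N = sets borel"
    and "convex_on UNIV f" "\<And>x. 0 \<le> f x"
  shows "(\<integral>\<^sup>+\<omega>. ennreal (f (X \<omega>)) \<partial>M) \<le> (\<integral>\<^sup>+x. ennreal (f x) \<partial>N)"
proof -
  have neg: "ennreal (- f x) = 0" for x using assms(5)[of x] by (simp add: ennreal_neg)
  have "f \<in> borel_measurable N"
    using convex_measurable[of "\<lambda>x. x" borel UNIV f] assms(3,4)
    by (simp add: measurable_cong_sets[OF assms(3) refl])
  moreover have "(\<lambda>\<omega>. f (X \<omega>)) \<in> borel_measurable M"
    using convex_measurable[OF assms(2) _ _ assms(4)] by simp
  ultimately have "ext_expect M (\<lambda>\<omega>. f (X \<omega>)) \<le> ext_expect N f"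
    using assms(1,4) unfolding cx_le_def expect_exists_def by (simp add: neg)
  then show ?thesis
    unfolding ext_expect_def by (simp add: neg zero_ennreal.rep_eq less_eq_ennreal.rep_eq)
qed

lemma mult_emeasure_le_nn_integral:
  assumes "A \<in> sets M" "\<And>\<omega>. \<omega> \<in> A \<Longrightarrow> c \<le> u \<omega>"
  shows "c * emeasure M A \<le> (\<integral>\<^sup>+\<omega>. u \<omega> \<partial>M)"
proof -
  have "c * emeasure M A = (\<integral>\<^sup>+\<omega>. c * indicator A \<omega> \<partial>M)"
    using assms(1) by (simp add: nn_integral_cmult_indicator)
  also have "\<dots> \<le> (\<integral>\<^sup>+\<omega>. u \<omega> \<partial>M)"
    using assms(2) by (intro nn_integral_mono) (auto split: split_indicator)
  finally show ?thesis .
qed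

lemma prob_coordinate_deviation_gt_le:
  fixes X :: "'a \<Rightarrow> real^'n" and mu :: "real^'n"
  assumes "prob_space M" and [measurable]: "X \<in> borel_measurable M"
    and "\<sigma> > 0" and "cx_le M X (gauss_iso mu \<sigma>)" and "0 \<le> \<alpha>"
  shows "measure M {\<omega>\<in>space M. \<alpha> < \<bar>X \<omega> $ i - mu $ i\<bar>} \<le> sqrt 2 * exp (- (\<alpha>^2) / (4 * \<sigma>^2))"
proof -
  interpret prob_space M by fact
  define f where "f x = exp ((x$i - mu$i)^2 / (4 * \<sigma>^2))" for x :: "real^'n"
  define A where "A = {\<omega>\<in>space M. \<alpha> < \<bar>X \<omega> $ i - mu $ i\<bar>}"
  define K where "K = exp (\<alpha>^2 / (4 * \<sigma>^2))"
  have "A \<in> sets M" unfolding A_def by measurable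
  moreover have "K \<le> f (X \<omega>)" if "\<omega> \<in> A" for \<omega>
  proof -
    have "\<alpha>^2 \<le> (X \<omega> $ i - mu $ i)^2"
      using that \<open>0 \<le> \<alpha>\<close> unfolding A_def abs_le_square_iff[symmetric] by simp
    then show ?thesis unfolding K_def f_def by (simp add: divide_right_mono)
  qed
  ultimately have "ennreal K * emeasure M A \<le> (\<integral>\<^sup>+\<omega>. ennreal (f (X \<omega>)) \<partial>M)"
    by (intro mult_emeasure_le_nn_integral) (auto intro: ennreal_leI)
  also have "\<dots> \<le> (\<integral>\<^sup>+x. ennreal (f x) \<partial>gauss_iso mu \<sigma>)"
    using assms \<open>\<sigma> > 0\<close> unfolding f_def
    by (intro cx_le_nn_integral_le convex_on_exp_square_coordinate) (auto simp: gauss_iso_def)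
  also have "\<dots> = ennreal (sqrt 2)"
    using \<open>\<sigma> > 0\<close> unfolding f_def
    by (subst nn_integral_gauss_iso_coordinate[where g = "\<lambda>t. ennreal (exp ((t - mu$i)^2 / (4 * \<sigma>^2)))"])
      (simp_all add: nn_integral_normal_density_exp_square)
  finally have "K * measure M A \<le> sqrt 2"
    by (simp add: emeasure_eq_measure ennreal_mult[symmetric] K_def)
  then show ?thesis
    unfolding A_def K_def by (simp add: exp_minus field_simps)
qed

lemma linf_norm_le_iff: "linf_norm (v::real^'n) \<le> a \<longleftrightarrow> (\<forall>i. \<bar>v$i\<bar> \<le> a)"
  unfolding linf_norm_def by (subst Max_le_iff) auto

lemma prob_linf_norm_deviation_le_ge:
  fixes X :: "'a \<Rightarrow> real^'n" and mu :: "real^'n"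
  assumes "prob_space M" and [measurable]: "X \<in> borel_measurable M"
    and "\<sigma> > 0" and "cx_le M X (gauss_iso mu \<sigma>)" and "0 \<le> \<alpha>"
  shows "measure M {\<omega>\<in>space M. linf_norm (X \<omega> - mu) \<le> \<alpha>}
           \<ge> 1 - sqrt 2 * real CARD('n) * exp (- (\<alpha>^2) / (4 * \<sigma>^2))"
proof -
  interpret prob_space M by fact
  define A where "A i = {\<omega>\<in>space M. \<alpha> < \<bar>X \<omega> $ i - mu $ i\<bar>}" for i
  have [measurable]: "A i \<in> sets M" for i unfolding A_def by measurable
  have "{\<omega>\<in>space M. linf_norm (X \<omega> - mu) \<le> \<alpha>} = space M - (\<Union>i. A i)"
    unfolding A_def linf_norm_le_iff by (auto simp: not_less) (meson not_less)
  moreover have "measure M (\<Union>i. A i) \<le> (\<Sum>i\<in>UNIV. measure M (A i))"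
    by (rule measure_UNION_le) auto
  moreover have "(\<Sum>i\<in>UNIV. measure M (A i)) \<le> (\<Sum>i\<in>(UNIV::'n set). sqrt 2 * exp (- (\<alpha>^2) / (4 * \<sigma>^2)))"
    unfolding A_def by (intro sum_mono prob_coordinate_deviation_gt_le assms)
  ultimately show ?thesis by (simp add: prob_compl mult_ac)
qed

theorem mainTheorem13:
  fixes M :: "'a measure" and X :: "'a \<Rightarrow> real^'n" and mu :: "real^'n" and \<sigma> :: real
  assumes "prob_space M"
    and "X \<in> borel_measurable M"
    and "\<sigma> > 0"
    and "cx_le M X (gauss_iso mu \<sigma>)"
  shows "(\<forall>\<alpha>>0. measure M {\<omega>\<in>space M. linf_norm (X \<omega> - mu) \<le> \<alpha>}
            \<ge> 1 - sqrt 2 * real CARD('n) * exp (- (\<alpha>^2) / (4 * \<sigma>^2)))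
       \<and> (\<forall>\<gamma>. 0 < \<gamma> \<and> \<gamma> \<le> 1 \<longrightarrow>
            measure M {\<omega>\<in>space M. linf_norm (X \<omega> - mu)
                \<le> 2 * \<sigma> * sqrt (ln (sqrt 2 * real CARD('n) / \<gamma>))} \<ge> 1 - \<gamma>)"
proof (intro conjI allI impI)
  fix \<gamma> :: real assume \<gamma>: "0 < \<gamma> \<and> \<gamma> \<le> 1"
  define L where "L = ln (sqrt 2 * real CARD('n) / \<gamma>)"
  have "1 * 1 < sqrt 2 * real CARD('n)"
    by (rule mult_less_le_imp_less) auto
  then have "0 \<le> L" unfolding L_def using \<gamma> by simp
  then have "sqrt 2 * real CARD('n) * exp (- ((2 * \<sigma> * sqrt L)^2) / (4 * \<sigma>^2)) = \<gamma>"
    unfolding L_def using \<gamma> \<open>\<sigma> > 0\<close> by (simp add: power_mult_distrib exp_minus)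
  then show "measure M {\<omega>\<in>space M. linf_norm (X \<omega> - mu)
      \<le> 2 * \<sigma> * sqrt (ln (sqrt 2 * real CARD('n) / \<gamma>))} \<ge> 1 - \<gamma>"
    using prob_linf_norm_deviation_le_ge[OF assms, of "2 * \<sigma> * sqrt L"] \<open>0 \<le> L\<close> \<open>\<sigma> > 0\<close>
    unfolding L_def by simp
qed (use prob_linf_norm_deviation_le_ge[OF assms] in simp)

end
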